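(* Let $\mathcal{M}$ be a deterministic MDP and $\mathcal{D}$ a dataset. Let $\pi_{\text{BCQL}}$ and $\pi_{\text{SCQL}}$ be the policies produced by BCQL and SCQL respectively. Then $V_{\pi_{\text{SCQL}}}(s)\ge V_{\pi_{\text{BCQL}}}(s)$ for all $s\in\mathcal{D}$.
   Context: A deterministic MDP has transition probabilities $p(s'|s,a)\in\{0,1\}$, rewards $r(s,a,s')=r(s,s')$ and discount $0\le\gamma<1$. State reachability: $s'\in\mathcal{SR}_{\mathcal{M}}(s)$ iff there is an action $a$ with $p(s'|s,a)=1$. The dataset $\mathcal{D}$ is a fixed collection of transitions $(s,a,r,s')$; "$s\in\mathcal{D}$" means $s$ appears as a state in $\mathcal{D}$ and "$(s,a)\in\mathcal{D}$" means the pair appears in a transition. Batch-constrained Q-learning (BCQL) performs $Q(s,a)\leftarrow(1-\alpha)Q(s,a)+\alpha[r(s,a,s')+\gamma\max_{a':(s',a')\in\mathcal{D}}Q(s',a')]$ on dataset transitions and outputs the policy $\pi_{\text{BCQL}}(s)=\operatorname{argmax}_{a:(s,a)\in\mathcal{D}}Q(s,a)$. State-constrained QSS-learning (SCQL) performs $Q(s,s')\leftarrow(1-\alpha)Q(s,s')+\alpha[r(s,s')+\gamma\max_{s'':s''\in\mathcal{D},\,s''\in\mathcal{SR}_{\mathcal{M}}(s')}Q(s',s'')]$ and outputs the policy $\pi_{\text{SCQL}}(s)=\operatorname{argmax}_{s':s'\in\mathcal{D},\,s'\in\mathcal{SR}_{\mathcal{M}}(s)}Q(s,s')$ (executed via an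 action leading from $s$ to that next state). $V_\pi(s)$ denotes the value (expected discounted return) of policy $\pi$ from state $s$. The policies are those obtained from the converged $Q$-values of the respective procedures. *)

theory Defs
  imports Complex_Main
begin

text \<open>Deterministic MDP: a total transition function nxt :: state => action => state
  (p(s'|s,a) = 1 iff s' = nxt s a), rewards r :: state => state => real.
  A dataset is a set of transitions (s, a, reward, s').\<close>

definition SR :: "('s \<Rightarrow> 'a \<Rightarrow> 's) \<Rightarrow> 's \<Rightarrow> 's set" where
  "SR nxt s = {s'. \<exists>a. nxt s a = s'}"

definition ds_states :: "('s \<times> 'a \<times> real \<times> 's) set \<Rightarrow> 's set" where
  "ds_states D = {s. \<exists>a rr s'. (s, a, rr, s') \<in> D} \<union> {s'. \<exists>s a rr. (s, a, rr, s') \<in> D}"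

definition ds_pairs :: "('s \<times> 'a \<times> real \<times> 's) set \<Rightarrow> ('s \<times> 'a) set" where
  "ds_pairs D = {(s, a). \<exists>rr s'. (s, a, rr, s') \<in> D}"

definition ds_consistent ::
  "('s \<Rightarrow> 'a \<Rightarrow> 's) \<Rightarrow> ('s \<Rightarrow> 's \<Rightarrow> real) \<Rightarrow> ('s \<times> 'a \<times> real \<times> 's) set \<Rightarrow> bool" where
  "ds_consistent nxt r D \<longleftrightarrow> (\<forall>(s, a, rr, s') \<in> D. s' = nxt s a \<and> rr = r s s')"

definition bcql_fixpoint ::
  "real \<Rightarrow> ('s \<times> 'a \<times> real \<times> 's) set \<Rightarrow> ('s \<Rightarrow> 'a \<Rightarrow> real) \<Rightarrow> bool" where
  "bcql_fixpoint \<gamma> D Q \<longleftrightarrow>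
     (\<forall>(s, a, rr, s') \<in> D.
        Q s a = rr + \<gamma> * Max ((\<lambda>a'. Q s' a') ` {a'. (s', a') \<in> ds_pairs D}))"

definition scql_fixpoint ::
  "('s \<Rightarrow> 'a \<Rightarrow> 's) \<Rightarrow> ('s \<Rightarrow> 's \<Rightarrow> real) \<Rightarrow> real \<Rightarrow> ('s \<times> 'a \<times> real \<times> 's) set
     \<Rightarrow> ('s \<Rightarrow> 's \<Rightarrow> real) \<Rightarrow> bool" where
  "scql_fixpoint nxt r \<gamma> D Q \<longleftrightarrow>
     (\<forall>s \<in> ds_states D. \<forall>s' \<in> ds_states D. s' \<in> SR nxt s \<longrightarrow>
        Q s s' = r s s' + \<gamma> * Max ((\<lambda>s''. Q s' s'') ` {s''. s'' \<in> ds_states D \<and> s'' \<in> SR nxt s'}))"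

definition bcql_policy ::
  "('s \<times> 'a \<times> real \<times> 's) set \<Rightarrow> ('s \<Rightarrow> 'a \<Rightarrow> real) \<Rightarrow> ('s \<Rightarrow> 'a) \<Rightarrow> bool" where
  "bcql_policy D Q \<pi> \<longleftrightarrow>
     (\<forall>s \<in> ds_states D. (s, \<pi> s) \<in> ds_pairs D \<and>
        (\<forall>a. (s, a) \<in> ds_pairs D \<longrightarrow> Q s a \<le> Q s (\<pi> s)))"

text \<open>pi is (an action-level execution of) an SCQL greedy policy: at each dataset state it
  takes an action leading to a next state that maximises Q(s,.) over reachable dataset states.\<close>
definition scql_policy ::
  "('s \<Rightarrow> 'a \<Rightarrow> 's) \<Rightarrow> ('s \<times> 'a \<times> real \<times> 's) set \<Rightarrow> ('s \<Rightarrow> 's \<Rightarrow> real) \<Rightarrow> ('s \<Rightarrow> 'a) \<Rightarrow> bool" where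
  "scql_policy nxt D Q \<pi> \<longleftrightarrow>
     (\<forall>s \<in> ds_states D. nxt s (\<pi> s) \<in> ds_states D \<and>
        (\<forall>t. t \<in> ds_states D \<and> t \<in> SR nxt s \<longrightarrow> Q s t \<le> Q s (nxt s (\<pi> s))))"

definition traj :: "('s \<Rightarrow> 'a \<Rightarrow> 's) \<Rightarrow> ('s \<Rightarrow> 'a) \<Rightarrow> 's \<Rightarrow> nat \<Rightarrow> 's" where
  "traj nxt \<pi> s n = ((\<lambda>x. nxt x (\<pi> x)) ^^ n) s"

definition policy_value ::
  "('s \<Rightarrow> 'a \<Rightarrow> 's) \<Rightarrow> ('s \<Rightarrow> 's \<Rightarrow> real) \<Rightarrow> real \<Rightarrow> ('s \<Rightarrow> 'a) \<Rightarrow> 's \<Rightarrow> real" where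
  "policy_value nxt r \<gamma> \<pi> s = (\<Sum>n. \<gamma> ^ n * r (traj nxt \<pi> s n) (traj nxt \<pi> s (Suc n)))"

end

theory Submission
  imports Defs
begin

text \<open>Let \<open>V s = Qs s s'\<close> with \<open>s'\<close> the SCQL-greedy successor of \<open>s\<close>. On the finite set of
  dataset states, the SCQL fixpoint equation says that \<open>V\<close> solves the Bellman equation of
  \<open>\<pi>s\<close> and dominates the one-step lookahead \<open>r s t + \<gamma> V t\<close> for every reachable dataset
  state \<open>t\<close>. Since \<open>\<pi>b\<close> only moves along dataset transitions, it never leaves the dataset
  states, so \<open>V\<close> is a supersolution of its Bellman equation. A discrete maximum principle
  for the discounted equations (look at a state where the difference is minimal) then gives
  \<open>V\<^sub>\<pi>\<^sub>b \<le> V \<le> V\<^sub>\<pi>\<^sub>s\<close>.\<close>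

lemma traj_Suc: "traj nxt \<pi> s (Suc n) = traj nxt \<pi> (nxt s (\<pi> s)) n"
  unfolding traj_def by (simp add: funpow_Suc_right del: funpow.simps)

lemma traj_closed:
  assumes "\<forall>x\<in>S. nxt x (\<pi> x) \<in> S" and "s \<in> S"
  shows "traj nxt \<pi> s n \<in> S"
  using assms unfolding traj_def by (induction n) auto

lemma summable_discounted_return:
  fixes r :: "'s \<Rightarrow> 's \<Rightarrow> real"
  assumes closed: "\<forall>x\<in>S. nxt x (\<pi> x) \<in> S" and "s \<in> S"
    and bound: "\<And>x y. x \<in> S \<Longrightarrow> y \<in> S \<Longrightarrow> \<bar>r x y\<bar> \<le> B"
    and "0 \<le> \<gamma>" "\<gamma> < 1"
  shows "summable (\<lambda>n. \<gamma> ^ n * r (traj nxt \<pi> s n) (traj nxt \<pi> s (Suc n)))"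
proof (rule summable_comparison_test'[where N = 0])
  show "summable (\<lambda>n. B * \<gamma> ^ n)"
    using \<open>0 \<le> \<gamma>\<close> \<open>\<gamma> < 1\<close> by simp
  fix n
  have "\<bar>r (traj nxt \<pi> s n) (traj nxt \<pi> s (Suc n))\<bar> \<le> B"
    using bound traj_closed[where nxt = nxt and \<pi> = \<pi>, OF closed \<open>s \<in> S\<close>] by blast
  then show "norm (\<gamma> ^ n * r (traj nxt \<pi> s n) (traj nxt \<pi> s (Suc n))) \<le> B * \<gamma> ^ n"
    using \<open>0 \<le> \<gamma>\<close> by (simp add: abs_mult mult.commute[of B] mult_left_mono)
qed

lemma policy_value_Bellman:
  assumes "finite S" and closed: "\<forall>x\<in>S. nxt x (\<pi> x) \<in> S" and "s \<in> S"
    and "0 \<le> \<gamma>" "\<gamma> < 1"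
  shows "policy_value nxt r \<gamma> \<pi> s
    = r s (nxt s (\<pi> s)) + \<gamma> * policy_value nxt r \<gamma> \<pi> (nxt s (\<pi> s))"
proof -
  define s' where "s' = nxt s (\<pi> s)"
  define ret where "ret x n = \<gamma> ^ n * r (traj nxt \<pi> x n) (traj nxt \<pi> x (Suc n))" for x n
  define B where "B = Max ((\<lambda>(x, y). \<bar>r x y\<bar>) ` (S \<times> S))"
  have bound: "\<bar>r x y\<bar> \<le> B" if "x \<in> S" "y \<in> S" for x y
    unfolding B_def using \<open>finite S\<close> that by (intro Max_ge) auto
  have "s' \<in> S"
    using closed \<open>s \<in> S\<close> unfolding s'_def by blast
  then have "ret s' sums policy_value nxt r \<gamma> \<pi> s'"
    using summable_discounted_return[where nxt = nxt and \<pi> = \<pi> and r = r and B = B,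
        OF closed _ bound \<open>0 \<le> \<gamma>\<close> \<open>\<gamma> < 1\<close>]
    unfolding ret_def policy_value_def by (simp add: summable_sums)
  then have "(\<lambda>n. \<gamma> * ret s' n) sums (\<gamma> * policy_value nxt r \<gamma> \<pi> s')"
    by (rule sums_mult)
  moreover have "(\<lambda>n. \<gamma> * ret s' n) = (\<lambda>n. ret s (Suc n))"
    unfolding ret_def s'_def by (simp add: traj_Suc mult.assoc)
  ultimately have "ret s sums (\<gamma> * policy_value nxt r \<gamma> \<pi> s' + ret s 0)"
    by (simp add: sums_Suc_iff)
  moreover have "ret s 0 = r s s'"
    unfolding ret_def traj_def s'_def by simp
  ultimately have "ret s sums (r s s' + \<gamma> * policy_value nxt r \<gamma> \<pi> s')"
    by (simp add: add.commute)
  then show ?thesis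
    unfolding s'_def policy_value_def ret_def by (rule sums_unique[symmetric])
qed

lemma discounted_supersolution_nonneg:
  fixes g :: "'s \<Rightarrow> real"
  assumes "finite S" and closed: "\<forall>x\<in>S. f x \<in> S"
    and "0 \<le> \<gamma>" "\<gamma> < 1"
    and super: "\<forall>x\<in>S. \<gamma> * g (f x) \<le> g x" and "s \<in> S"
  shows "0 \<le> g s"
proof -
  have "S \<noteq> {}"
    using \<open>s \<in> S\<close> by blast
  then obtain m where "m \<in> S" and "Min (g ` S) = g m"
    by (rule obtains_MIN[OF \<open>finite S\<close>])
  then have m_min: "g m \<le> g y" if "y \<in> S" for y
    using \<open>finite S\<close> that by (metis Min_le finite_imageI imageI)
  have "\<gamma> * g m \<le> \<gamma> * g (f m)"
    using m_min closed \<open>m \<in> S\<close> \<open>0 \<le> \<gamma>\<close> by (simp add: mult_left_mono)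
  also have "\<dots> \<le> g m"
    using super \<open>m \<in> S\<close> by blast
  finally have "0 \<le> (1 - \<gamma>) * g m"
    by (simp add: algebra_simps)
  then have "0 \<le> g m"
    using \<open>\<gamma> < 1\<close> by (simp add: zero_le_mult_iff)
  then show ?thesis
    using m_min[OF \<open>s \<in> S\<close>] by linarith
qed

lemma policy_value_le_supersolution:
  assumes "finite S" and closed: "\<forall>x\<in>S. nxt x (\<pi> x) \<in> S"
    and "0 \<le> \<gamma>" "\<gamma> < 1"
    and super: "\<forall>x\<in>S. r x (nxt x (\<pi> x)) + \<gamma> * V (nxt x (\<pi> x)) \<le> V x" and "s \<in> S"
  shows "policy_value nxt r \<gamma> \<pi> s \<le> V s"
proof -
  have "\<forall>x\<in>S. \<gamma> * (V (nxt x (\<pi> x)) - policy_value nxt r \<gamma> \<pi> (nxt x (\<pi> x)))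
      \<le> V x - policy_value nxt r \<gamma> \<pi> x"
    using super policy_value_Bellman[where nxt = nxt and \<pi> = \<pi>,
        OF \<open>finite S\<close> closed _ \<open>0 \<le> \<gamma>\<close> \<open>\<gamma> < 1\<close>]
    by (simp add: algebra_simps)
  from discounted_supersolution_nonneg[OF \<open>finite S\<close> closed \<open>0 \<le> \<gamma>\<close> \<open>\<gamma> < 1\<close> this \<open>s \<in> S\<close>]
  show ?thesis by simp
qed

lemma policy_value_ge_subsolution:
  assumes "finite S" and closed: "\<forall>x\<in>S. nxt x (\<pi> x) \<in> S"
    and "0 \<le> \<gamma>" "\<gamma> < 1"
    and sub: "\<forall>x\<in>S. V x \<le> r x (nxt x (\<pi> x)) + \<gamma> * V (nxt x (\<pi> x))" and "s \<in> S"
  shows "V s \<le> policy_value nxt r \<gamma> \<pi> s"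
proof -
  have "\<forall>x\<in>S. \<gamma> * (policy_value nxt r \<gamma> \<pi> (nxt x (\<pi> x)) - V (nxt x (\<pi> x)))
      \<le> policy_value nxt r \<gamma> \<pi> x - V x"
    using sub policy_value_Bellman[where nxt = nxt and \<pi> = \<pi>,
        OF \<open>finite S\<close> closed _ \<open>0 \<le> \<gamma>\<close> \<open>\<gamma> < 1\<close>]
    by (simp add: algebra_simps)
  from discounted_supersolution_nonneg[OF \<open>finite S\<close> closed \<open>0 \<le> \<gamma>\<close> \<open>\<gamma> < 1\<close> this \<open>s \<in> S\<close>]
  show ?thesis by simp
qed

lemma finite_ds_states:
  assumes "finite D"
  shows "finite (ds_states D)"
proof -
  have "ds_states D = fst ` D \<union> (\<lambda>(s, a, rr, s'). s') ` D"
    unfolding ds_states_def by force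
  then show ?thesis
    using assms by simp
qed

lemma nxt_in_SR [simp]: "nxt s a \<in> SR nxt s"
  unfolding SR_def by blast

lemma bcql_policy_closed:
  assumes "ds_consistent nxt r D" and "bcql_policy D Q \<pi>"
  shows "\<forall>s\<in>ds_states D. nxt s (\<pi> s) \<in> ds_states D"
proof
  fix s assume "s \<in> ds_states D"
  then obtain rr s' where "(s, \<pi> s, rr, s') \<in> D"
    using assms(2) unfolding bcql_policy_def ds_pairs_def by blast
  moreover from this have "s' = nxt s (\<pi> s)"
    using assms(1) unfolding ds_consistent_def by fastforce
  ultimately show "nxt s (\<pi> s) \<in> ds_states D"
    unfolding ds_states_def by blast
qed

lemma scql_policy_closed:
  "scql_policy nxt D Q \<pi> \<Longrightarrow> \<forall>s\<in>ds_states D. nxt s (\<pi> s) \<in> ds_states D"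
  unfolding scql_policy_def by blast

text \<open>The paper's \<open>V(s) = max Q(s, s')\<close> over reachable dataset states \<open>s'\<close>, attained at the
  greedy successor.\<close>
definition scql_value :: "('s \<Rightarrow> 'a \<Rightarrow> 's) \<Rightarrow> ('s \<Rightarrow> 's \<Rightarrow> real) \<Rightarrow> ('s \<Rightarrow> 'a) \<Rightarrow> 's \<Rightarrow> real"
  where "scql_value nxt Q \<pi> s = Q s (nxt s (\<pi> s))"

lemma scql_fixpoint_eq:
  assumes "finite D" and fixpoint: "scql_fixpoint nxt r \<gamma> D Q" and pol: "scql_policy nxt D Q \<pi>"
    and "s \<in> ds_states D" "t \<in> ds_states D" "t \<in> SR nxt s"
  shows "Q s t = r s t + \<gamma> * scql_value nxt Q \<pi> t"
proof -
  have "Max (Q t ` {u. u \<in> ds_states D \<and> u \<in> SR nxt t}) = Q t (nxt t (\<pi> t))"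
  proof (rule Max_eqI)
    show "finite (Q t ` {u. u \<in> ds_states D \<and> u \<in> SR nxt t})"
      using finite_ds_states[OF \<open>finite D\<close>] by simp
    show "y \<le> Q t (nxt t (\<pi> t))" if "y \<in> Q t ` {u. u \<in> ds_states D \<and> u \<in> SR nxt t}" for y
      using pol that \<open>t \<in> ds_states D\<close> unfolding scql_policy_def by blast
    show "Q t (nxt t (\<pi> t)) \<in> Q t ` {u. u \<in> ds_states D \<and> u \<in> SR nxt t}"
      using pol \<open>t \<in> ds_states D\<close> unfolding scql_policy_def by simp
  qed
  then show ?thesis
    using fixpoint assms(4-6) unfolding scql_fixpoint_def scql_value_def by simp
qed

lemma scql_value_Bellman:
  assumes "finite D" "scql_fixpoint nxt r \<gamma> D Q" "scql_policy nxt D Q \<pi>" "s \<in> ds_states D"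
  shows "scql_value nxt Q \<pi> s = r s (nxt s (\<pi> s)) + \<gamma> * scql_value nxt Q \<pi> (nxt s (\<pi> s))"
  using scql_fixpoint_eq[OF assms] scql_policy_closed[OF assms(3)] assms(4)
  by (simp add: scql_value_def)

lemma scql_value_ge_lookahead:
  assumes "finite D" "scql_fixpoint nxt r \<gamma> D Q" "scql_policy nxt D Q \<pi>"
    and "s \<in> ds_states D" "t \<in> ds_states D" "t \<in> SR nxt s"
  shows "r s t + \<gamma> * scql_value nxt Q \<pi> t \<le> scql_value nxt Q \<pi> s"
proof -
  have "Q s t \<le> scql_value nxt Q \<pi> s"
    using assms(3-6) unfolding scql_policy_def scql_value_def by blast
  then show ?thesis
    using scql_fixpoint_eq[OF assms] by simp
qed

theorem theorem3p7:
  fixes nxt :: "'s \<Rightarrow> 'a \<Rightarrow> 's" and r :: "'s \<Rightarrow> 's \<Rightarrow> real" and \<gamma> :: real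
    and D :: "('s \<times> 'a \<times> real \<times> 's) set"
    and Qb :: "'s \<Rightarrow> 'a \<Rightarrow> real" and Qs :: "'s \<Rightarrow> 's \<Rightarrow> real"
    and \<pi>b \<pi>s :: "'s \<Rightarrow> 'a"
  assumes "0 \<le> \<gamma>" and "\<gamma> < 1"
    and "finite D"
    and "ds_consistent nxt r D"
    and "\<forall>s \<in> ds_states D. \<exists>a. (s, a) \<in> ds_pairs D"
    and "bcql_fixpoint \<gamma> D Qb"
    and "scql_fixpoint nxt r \<gamma> D Qs"
    and "bcql_policy D Qb \<pi>b"
    and "scql_policy nxt D Qs \<pi>s"
  shows "\<forall>s \<in> ds_states D. policy_value nxt r \<gamma> \<pi>s s \<ge> policy_value nxt r \<gamma> \<pi>b s"
proof
  fix s assume "s \<in> ds_states D"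
  have fin: "finite (ds_states D)"
    using \<open>finite D\<close> by (rule finite_ds_states)
  note closed_s = scql_policy_closed[OF assms(9)]
  note closed_b = bcql_policy_closed[OF assms(4,8)]
  have "scql_value nxt Qs \<pi>s s \<le> policy_value nxt r \<gamma> \<pi>s s"
    using scql_value_Bellman[OF assms(3,7,9)] \<open>s \<in> ds_states D\<close>
    by (intro policy_value_ge_subsolution[where nxt = nxt and \<pi> = \<pi>s, OF fin closed_s assms(1,2)])
      simp_all
  moreover have "policy_value nxt r \<gamma> \<pi>b s \<le> scql_value nxt Qs \<pi>s s"
    using scql_value_ge_lookahead[OF assms(3,7,9)] closed_b \<open>s \<in> ds_states D\<close>
    by (intro policy_value_le_supersolution[where nxt = nxt and \<pi> = \<pi>b, OF fin closed_b assms(1,2)])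
      simp_all
  ultimately show "policy_value nxt r \<gamma> \<pi>s s \<ge> policy_value nxt r \<gamma> \<pi>b s"
    by linarith
qed

end
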